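(* Let $p,q\ge 2$ be relatively prime integers. Then $$p\sum_{n=1}^{q-1}\cot\!\Big(\frac{\pi np}{q}\Big)\cot^3\!\Big(\frac{\pi n}{q}\Big)+q\sum_{n=1}^{p-1}\cot\!\Big(\frac{\pi nq}{p}\Big)\cot^3\!\Big(\frac{\pi n}{p}\Big)=\frac{1}{45}\left(p^4+q^4-5p^2q^2-15p^2-15q^2+45pq-12\right).$$ *)

theory Defs
  imports "HOL-Analysis.Analysis"
begin

end

theory Submission
  imports Defs "HOL-Complex_Analysis.Complex_Analysis"
begin

(* Let r(u) = (u + 1)/(u - 1) and f(z) = r(z^q) r(z^p) r(z)^3 / z.  Since z f(z) -> 1 at infinity,
   the residues of f add up to 1.  The residue at 0 is r(0)^5 = -1.  A root of unity
   w = exp(2 pi i n/q) other than 1 is not a p-th root of unity, as p and q are coprime, so f has a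
   simple pole at w with residue (2/q) r(w^p) r(w)^3 = (2/q) cot(pi n p/q) cot(pi n/q)^3, because
   r(exp(2ix)) = -i cot x; symmetrically at the p-th roots of unity.  At z = 1 the pole has order
   five, and its residue is the coefficient of w^4 in the power series of w^5 f(1 + w), which is the
   polynomial in p and q (divided by p q) that gives the right-hand side. *)

lemma root_unity_coprime_eq_1:
  fixes z :: "'a::comm_ring_1"
  assumes "z ^ p = 1" "z ^ q = 1" "coprime p q"
  shows "z = 1"
proof (cases "p = 0")
  case True
  then show ?thesis using assms by simp
next
  case False
  then obtain a b where "p * a = q * b + 1"
    using bezout_nat[of p q] assms(3) by auto
  then have "z ^ (p * a) = z ^ (q * b) * z" by (simp add: power_add)
  then show ?thesis using assms(1,2) by (simp add: power_mult)
qed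

lemma norm_root_unity:
  fixes z :: complex
  assumes "z ^ n = 1" "n > 0"
  shows "norm z = 1"
  by (metis assms norm_ge_zero norm_one norm_power power_eq_iff_eq_base power_one)

lemma residue_divide_simple_zero:
  fixes f g :: "complex \<Rightarrow> complex"
  assumes "open S" "z \<in> S" "f holomorphic_on S" "g holomorphic_on S"
    and "\<forall>w\<in>S - {z}. g w \<noteq> 0" "g z = 0" "(g has_field_derivative g') (at z)" "g' \<noteq> 0"
  shows "residue (\<lambda>w. f w / g w) z = f z / g'"
proof (rule residue_simple')
  show "(\<lambda>w. f w / g w) holomorphic_on S - {z}"
    using assms by (auto intro!: holomorphic_intros)
  have "isCont f z"
    using assms by (meson holomorphic_on_imp_continuous_on continuous_on_eq_continuous_at)
  moreover have "((\<lambda>w. (g w - g z) / (w - z)) \<longlongrightarrow> g') (at z)"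
    using assms(7) by (simp add: has_field_derivative_iff)
  ultimately have "((\<lambda>w. f w / ((g w - g z) / (w - z))) \<longlongrightarrow> f z / g') (at z)"
    using assms(8) by (intro tendsto_divide) (auto simp: isCont_def)
  moreover have "\<forall>\<^sub>F w in at z. f w / ((g w - g z) / (w - z)) = f w / g w * (w - z)"
    using assms(6) by (auto simp: eventually_at_filter)
  ultimately show "((\<lambda>w. f w / g w * (w - z)) \<longlongrightarrow> f z / g') (at z)"
    by (rule Lim_transform_eventually)
qed (use assms in auto)

lemma sum_residues_eq_tendsto_at_infinity:
  fixes f :: "complex \<Rightarrow> complex"
  assumes S: "finite S" and holo: "f holomorphic_on - S"
    and lim: "((\<lambda>z. z * f z) \<longlongrightarrow> c) at_infinity"
  shows "(\<Sum>z\<in>S. residue f z) = c"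
proof -
  define T where "T = (\<Sum>z\<in>S. residue f z)"
  obtain R0 where "R0 > 0" and R0: "S \<subseteq> ball 0 R0"
    using bounded_subset_ballD[OF finite_imp_bounded[OF S]] by blast
  have integral: "(f has_contour_integral 2 * pi * \<i> * T) (circlepath 0 R)" if "R \<ge> R0" for R
  proof -
    have img: "path_image (circlepath 0 R) \<subseteq> - S"
      using R0 that \<open>R0 > 0\<close> by auto
    have "contour_integral (circlepath 0 R) f
            = 2 * pi * \<i> * (\<Sum>z\<in>S. winding_number (circlepath 0 R) z * residue f z)"
      using holo img by (intro Residue_theorem[OF open_UNIV connected_UNIV S])
        (auto simp: Compl_eq_Diff_UNIV)
    also have "(\<Sum>z\<in>S. winding_number (circlepath 0 R) z * residue f z) = T"
      unfolding T_def using R0 that by (intro sum.cong refl) (auto simp: winding_number_circlepath)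
    finally show ?thesis
      using holo img by (metis has_contour_integral_integral contour_integrable_holomorphic_simple
          open_Compl finite_imp_closed S valid_path_circlepath)
  qed
  have bound: "norm (T - c) \<le> e" if "e > 0" for e
  proof -
    obtain R1 where R1: "\<And>z. norm z \<ge> R1 \<Longrightarrow> norm (z * f z - c) < e"
      using lim \<open>e > 0\<close> by (auto simp: tendsto_iff eventually_at_infinity dist_norm)
    define R where "R = max R0 R1"
    have "R > 0" using \<open>R0 > 0\<close> by (simp add: R_def)
    have "((\<lambda>z. c / (z - 0)) has_contour_integral 2 * pi * \<i> * c) (circlepath 0 R)"
      using Cauchy_integral_circlepath_simple[where f = "\<lambda>_. c" and w = 0 and z = 0 and r = R]
        \<open>R > 0\<close> by simp
    then have "((\<lambda>z. f z - c / (z - 0)) has_contour_integral 2 * pi * \<i> * T - 2 * pi * \<i> * c)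
            (circlepath 0 R)"
      by (intro has_contour_integral_diff integral) (simp add: R_def)
    then have "norm (2 * pi * \<i> * T - 2 * pi * \<i> * c) \<le> e / R * (2 * pi * R)"
    proof (rule has_contour_integral_bound_circlepath)
      fix z :: complex assume z: "norm (z - 0) = R"
      then have "z \<noteq> 0" using \<open>R > 0\<close> by auto
      have "norm (z * f z - c) \<le> e" using R1[of z] z by (simp add: R_def)
      moreover have "f z - c / (z - 0) = (z * f z - c) / z"
        using \<open>z \<noteq> 0\<close> by (simp add: field_simps)
      ultimately show "norm (f z - c / (z - 0)) \<le> e / R"
        using z \<open>R > 0\<close> by (simp add: norm_divide divide_right_mono)
    qed (use \<open>e > 0\<close> \<open>R > 0\<close> in auto)
    also have "e / R * (2 * pi * R) = 2 * pi * e"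
      using \<open>R > 0\<close> by simp
    also have "2 * pi * \<i> * T - 2 * pi * \<i> * c = (2 * pi * \<i>) * (T - c)"
      by (simp add: algebra_simps)
    finally show ?thesis
      by (simp add: norm_mult)
  qed
  have "norm (T - c) \<le> 0"
    using bound by (rule dense_ge)
  then have "T = c" by simp
  then show ?thesis by (simp add: T_def)
qed

lemma fps_nth_divide_eqI:
  fixes N M :: "'a::field fps"
  assumes M0: "fps_nth M 0 \<noteq> 0"
    and coeffs: "\<forall>k\<in>{..n}. fps_nth N k = (\<Sum>i=0..k. a i * fps_nth M (k - i))"
  shows "fps_nth (N / M) n = a n"
proof (rule ccontr)
  define D where "D = N / M - Abs_fps a"
  assume "fps_nth (N / M) n \<noteq> a n"
  then have "fps_nth D n \<noteq> 0" by (simp add: D_def)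
  then have "D \<noteq> 0" and "subdegree D \<le> n" by (auto intro: subdegree_leI)
  have "M \<noteq> 0" using M0 by auto
  have "D * M = N - Abs_fps a * M"
    using M0 by (simp add: D_def algebra_simps fps_times_divide_eq)
  then have "fps_nth (D * M) k = 0" if "k \<le> n" for k
    using coeffs that by (simp add: fps_mult_nth)
  moreover have "subdegree (D * M) = subdegree D"
    using \<open>D \<noteq> 0\<close> \<open>M \<noteq> 0\<close> M0 by simp
  ultimately have "D * M = 0"
    using \<open>subdegree D \<le> n\<close> by (metis nth_subdegree_zero_iff)
  with \<open>D \<noteq> 0\<close> \<open>M \<noteq> 0\<close> show False by simp
qed

lemma fps_nth_4_binomial_quotient:
  fixes a b :: "'a::field_char_0"
  assumes "a \<noteq> 0" "b \<noteq> 0"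
  defines "N \<equiv> (fps_binomial a + 1) * (fps_binomial b + 1) * (2 + fps_X) ^ 3"
    and "M \<equiv> (1 + fps_X) * fps_shift 1 (fps_binomial a - 1) * fps_shift 1 (fps_binomial b - 1)"
  shows "fps_nth (N / M) 4 = (2/45) * (12 + 15 * a^2 + 15 * b^2 + 5 * a^2 * b^2 - a^4 - b^4) / (a * b)"
proof -
  note coeff_simps = fps_mult_nth atLeast0AtMost numeral_eq_Suc gbinomial_altdef_of_nat
    lessThan_Suc fps_numeral_nth
  have M: "fps_nth M 0 = a * b"
    "fps_nth M 1 = (1/2) * a * b^2 + (1/2) * a^2 * b"
    "fps_nth M 2 = (-1/12) * a * b + (-1/4) * a * b^2 + (1/6) * a * b^3 + (-1/4) * a^2 * b
      + (1/4) * a^2 * b^2 + (1/6) * a^3 * b"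
    "fps_nth M 3 = (1/12) * a * b + (1/8) * a * b^2 + (-1/6) * a * b^3 + (1/24) * a * b^4
      + (1/8) * a^2 * b + (-1/4) * a^2 * b^2 + (1/12) * a^2 * b^3 + (-1/6) * a^3 * b
      + (1/12) * a^3 * b^2 + (1/24) * a^4 * b"
    "fps_nth M 4 = (-13/180) * a * b + (-1/16) * a * b^2 + (5/36) * a * b^3 + (-1/16) * a * b^4
      + (1/120) * a * b^5 + (-1/16) * a^2 * b + (5/24) * a^2 * b^2 + (-1/8) * a^2 * b^3
      + (1/48) * a^2 * b^4 + (5/36) * a^3 * b + (-1/8) * a^3 * b^2 + (1/36) * a^3 * b^3
      + (-1/16) * a^4 * b + (1/48) * a^4 * b^2 + (1/120) * a^5 * b"
    unfolding M_def by (simp add: coeff_simps; (simp add: divide_simps)?; algebra)+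
  have N: "fps_nth N 0 = 32"
    "fps_nth N 1 = 48 + 16 * b + 16 * a"
    "fps_nth N 2 = 24 + 16 * b + 8 * b^2 + 16 * a + 8 * a * b + 8 * a^2"
    "fps_nth N 3 = 4 + (16/3) * b + 4 * b^2 + (8/3) * b^3 + (16/3) * a + 4 * a * b
      + 4 * a * b^2 + 4 * a^2 + 4 * a^2 * b + (8/3) * a^3"
    "fps_nth N 4 = (4/3) * b^2 + (2/3) * b^4 + (4/3) * a * b + (4/3) * a * b^3 + (4/3) * a^2
      + 2 * a^2 * b^2 + (4/3) * a^3 * b + (2/3) * a^4"
    unfolding N_def by (simp add: coeff_simps; (simp add: divide_simps)?; algebra)+
  \<comment> \<open>Solving the triangular system \<open>N = (N / M) * M\<close> coefficientwise gives
    \<open>fps_nth (N / M) k = c ! k / (a * b)\<close> for \<open>k \<le> 4\<close>.\<close>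
  define c where "c = [32, 48, 80/3 + 8/3 * a^2 + 8/3 * b^2, 16/3 + 4/3 * a^2 + 4/3 * b^2,
    (2/45) * (12 + 15 * a^2 + 15 * b^2 + 5 * a^2 * b^2 - a^4 - b^4)]"
  have atMost_1_nat: "{..1::nat} = {0, 1}" by auto
  have "\<forall>k\<in>{..4}. a * b * fps_nth N k = (\<Sum>i=0..k. c ! i * fps_nth M (k - i))"
    by (simp add: c_def M N atLeast0AtMost atMost_nat_numeral atMost_1_nat flip: One_nat_def;
        (intro conjI)?; algebra)
  then have "\<forall>k\<in>{..4}. fps_nth N k = (\<Sum>i=0..k. c ! i / (a * b) * fps_nth M (k - i))"
    using assms(1,2) by (simp add: sum_divide_distrib[symmetric] field_simps)
  then have "fps_nth (N / M) 4 = c ! 4 / (a * b)"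
    using M assms(1,2) by (intro fps_nth_divide_eqI) simp_all
  then show ?thesis by (simp add: c_def)
qed

definition cot_ratio :: "complex \<Rightarrow> complex" where
  "cot_ratio u = (u + 1) / (u - 1)"

lemma cot_ratio_cis: "cot_ratio (cis (2 * x)) = - \<i> * of_real (cot x)"
proof -
  have "cot_ratio (cis (2 * x)) = ((cis x + cis (-x)) * cis x) / ((cis x - cis (-x)) * cis x)"
    using cis_mult[of x x] cis_mult[of x "-x"] unfolding cot_ratio_def by (simp add: algebra_simps)
  also have "\<dots> = (cis x + cis (-x)) / (cis x - cis (-x))"
    by simp
  also have "cis x + cis (-x) = of_real (2 * cos x)" by (simp add: complex_eq_iff)
  also have "cis x - cis (-x) = \<i> * of_real (2 * sin x)" by (simp add: complex_eq_iff)
  also have "of_real (2 * cos x) / (\<i> * of_real (2 * sin x)) = - \<i> * of_real (cot x)"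
    by (cases "sin x = 0") (simp_all add: cot_def field_simps)
  finally show ?thesis .
qed

lemma tendsto_cot_ratio_at_infinity: "(cot_ratio \<longlongrightarrow> 1) at_infinity"
proof -
  have "((\<lambda>u::complex. (1 + inverse u) / (1 - inverse u)) \<longlongrightarrow> (1 + 0) / (1 - 0)) at_infinity"
    by (intro tendsto_intros tendsto_inverse_0) auto
  moreover have "\<forall>\<^sub>F u in at_infinity. (1 + inverse u) / (1 - inverse u) = cot_ratio u"
    unfolding eventually_at_infinity
  proof (intro exI[of _ 2] allI impI)
    fix u :: complex assume "2 \<le> norm u"
    then have "u \<noteq> 0" "u \<noteq> 1" by auto
    then show "(1 + inverse u) / (1 - inverse u) = cot_ratio u"
      by (simp add: cot_ratio_def field_simps)
  qed
  ultimately show ?thesis by (simp add: Lim_transform_eventually)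
qed

lemma sum_roots_unity_cot_ratio:
  assumes "q > 0"
  shows "(\<Sum>z\<in>{z. z ^ q = 1}. cot_ratio (z ^ p) * cot_ratio z ^ 3)
    = of_real (\<Sum>n=1..q-1. cot (pi * real n * real p / real q) * cot (pi * real n / real q) ^ 3)"
proof -
  define h where "h n = cot (pi * real n * real p / real q) * cot (pi * real n / real q) ^ 3" for n
  have "(\<Sum>z\<in>{z. z ^ q = 1}. cot_ratio (z ^ p) * cot_ratio z ^ 3)
      = (\<Sum>n<q. cot_ratio (cis (2 * pi * n / q) ^ p) * cot_ratio (cis (2 * pi * n / q)) ^ 3)"
    by (rule sum.reindex_bij_betw[OF Complex.bij_betw_roots_unity[OF assms], symmetric])
  also have "\<dots> = (\<Sum>n<q. of_real (h n))"
  proof (intro sum.cong refl)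
    fix n :: nat
    have "cis (2 * pi * n / q) ^ p = cis (p * (2 * pi * n / q))"
      by (rule Complex.DeMoivre)
    also have "p * (2 * pi * n / q) = 2 * (pi * n * p / q)"
      by simp
    finally have root_p: "cis (2 * pi * n / q) ^ p = cis (2 * (pi * n * p / q))" .
    have root: "cis (2 * pi * n / q) = cis (2 * (pi * n / q))"
      by (simp add: mult_ac)
    have minus_i_cancel: "(-\<i> * a) * (-\<i> * b) ^ 3 = a * b ^ 3" for a b :: complex
      by (simp add: power3_eq_cube algebra_simps)
    show "cot_ratio (cis (2 * pi * n / q) ^ p) * cot_ratio (cis (2 * pi * n / q)) ^ 3
        = of_real (h n)"
      unfolding root_p unfolding root cot_ratio_cis minus_i_cancel h_def by simp
  qed
  also have "(\<Sum>n<q. of_real (h n)) = of_real (\<Sum>n=1..q-1. h n)"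
  proof -
    have "{..<q} = insert 0 {1..q-1}" using assms by auto
    then show ?thesis by (simp add: h_def)
  qed
  finally show ?thesis unfolding h_def .
qed

definition cot_kernel :: "nat \<Rightarrow> nat \<Rightarrow> complex \<Rightarrow> complex" where
  "cot_kernel p q z = cot_ratio (z ^ q) * cot_ratio (z ^ p) * cot_ratio z ^ 3 / z"

lemma cot_kernel_commute: "cot_kernel p q = cot_kernel q p"
  by (rule ext) (simp add: cot_kernel_def mult_ac)

lemma cot_kernel_holomorphic:
  "cot_kernel p q holomorphic_on - insert 0 ({z. z ^ q = 1} \<union> {z. z ^ p = 1})"
  unfolding cot_kernel_def cot_ratio_def by (intro holomorphic_intros) auto

lemma sum_residues_cot_kernel:
  assumes "p > 0" "q > 0"
  shows "(\<Sum>z\<in>insert 0 ({z. z ^ q = 1} \<union> {z. z ^ p = 1}). residue (cot_kernel p q) z) = 1"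
proof (rule sum_residues_eq_tendsto_at_infinity)
  show "finite (insert 0 ({z. z ^ q = 1} \<union> {z::complex. z ^ p = 1}))"
    using assms by (simp add: finite_roots_unity)
  have "((\<lambda>z. cot_ratio (z ^ n)) \<longlongrightarrow> 1) at_infinity" if "n > 0" for n
    using filterlim_compose[OF tendsto_cot_ratio_at_infinity
        Limits.filterlim_power_at_infinity[OF filterlim_ident that]] .
  then have "((\<lambda>z. cot_ratio (z ^ q) * cot_ratio (z ^ p) * cot_ratio z ^ 3)
      \<longlongrightarrow> 1 * 1 * 1 ^ 3) at_infinity"
    using assms by (intro tendsto_mult tendsto_power tendsto_cot_ratio_at_infinity)
  moreover have "\<forall>\<^sub>F z in at_infinity. cot_ratio (z ^ q) * cot_ratio (z ^ p) * cot_ratio z ^ 3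
      = z * cot_kernel p q z"
    unfolding eventually_at_infinity cot_kernel_def by (intro exI[of _ 1]) auto
  ultimately show "((\<lambda>z. z * cot_kernel p q z) \<longlongrightarrow> 1) at_infinity"
    by (simp add: Lim_transform_eventually)
qed (rule cot_kernel_holomorphic)

lemma residue_cot_kernel_0:
  assumes "p > 0" "q > 0"
  shows "residue (cot_kernel p q) 0 = -1"
proof -
  define g where "g z = cot_ratio (z ^ q) * cot_ratio (z ^ p) * cot_ratio z ^ 3" for z
  have "z ^ n \<noteq> 1" if "z \<in> ball 0 1" "n > 0" for z :: complex and n
    using that norm_root_unity[of z n] by auto
  then have "g holomorphic_on ball 0 1"
    unfolding g_def cot_ratio_def using assms by (intro holomorphic_intros) auto
  then have "residue (\<lambda>z. g z / (z - 0)) 0 = g 0"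
    by (intro residue_simple) auto
  moreover have "(\<lambda>z. g z / (z - 0)) = cot_kernel p q"
    by (simp add: g_def cot_kernel_def fun_eq_iff)
  ultimately show ?thesis
    using assms by (simp add: g_def cot_ratio_def power_0_left)
qed

lemma residue_cot_kernel_root:
  assumes "p > 0" "q > 0" "coprime p q" "w ^ q = 1" "w \<noteq> 1"
  shows "residue (cot_kernel p q) w = 2 / of_nat q * cot_ratio (w ^ p) * cot_ratio w ^ 3"
proof -
  define S where "S = - (insert 0 ({z. z ^ q = 1} \<union> {z. z ^ p = 1}) - {w})"
  define f where "f z = (z ^ q + 1) * cot_ratio (z ^ p) * cot_ratio z ^ 3 / z" for z
  have "w \<noteq> 0" using assms by (auto simp: power_0_left)
  have "w ^ p \<noteq> 1" using root_unity_coprime_eq_1[of w p q] assms by auto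
  have "open S"
    unfolding S_def using assms by (intro open_Compl finite_imp_closed) (simp add: finite_roots_unity)
  have "w \<in> S" by (simp add: S_def)
  have "f holomorphic_on S"
    unfolding f_def cot_ratio_def S_def using \<open>w \<noteq> 0\<close> \<open>w ^ p \<noteq> 1\<close> assms(5)
    by (intro holomorphic_intros) auto
  have "((\<lambda>z. z ^ q - 1) has_field_derivative of_nat q * w ^ (q - 1)) (at w)"
    by (auto intro!: derivative_eq_intros)
  then have "residue (\<lambda>z. f z / (z ^ q - 1)) w = f w / (of_nat q * w ^ (q - 1))"
    using \<open>open S\<close> \<open>w \<in> S\<close> \<open>f holomorphic_on S\<close> \<open>w \<noteq> 0\<close> assms(2,4)
    by (intro residue_divide_simple_zero[where S = S]) (auto simp: S_def intro!: holomorphic_intros)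
  moreover have "(\<lambda>z. f z / (z ^ q - 1)) = cot_kernel p q"
    by (simp add: fun_eq_iff f_def cot_kernel_def cot_ratio_def[of "_ ^ q"] divide_inverse mult_ac)
  moreover have "w * w ^ (q - 1) = 1"
    using assms(2,4) by (metis power_eq_if not_gr0)
  ultimately show ?thesis
    using \<open>w \<noteq> 0\<close> assms(4) by (simp add: f_def field_simps)
qed

lemma residue_cot_kernel_1:
  assumes "p > 0" "q > 0"
  shows "residue (cot_kernel p q) 1 = (2/45) * (12 + 15 * of_nat q ^ 2 + 15 * of_nat p ^ 2
    + 5 * of_nat q ^ 2 * of_nat p ^ 2 - of_nat q ^ 4 - of_nat p ^ 4) / (of_nat q * of_nat p)"
proof -
  define V where "V n w = (if w = 0 then of_nat n else ((1 + w) ^ n - 1) / w ^ 1)"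
    for n :: nat and w :: complex
  define N :: "complex fps"
    where "N = ((1 + fps_X) ^ q + 1) * ((1 + fps_X) ^ p + 1) * (2 + fps_X) ^ 3"
  define M :: "complex fps"
    where "M = (1 + fps_X) * fps_shift 1 ((1 + fps_X) ^ q - 1) * fps_shift 1 ((1 + fps_X) ^ p - 1)"
  have V: "V n has_fps_expansion fps_shift 1 ((1 + fps_X) ^ n - 1)" if "n > 0" for n
    unfolding V_def
  proof (rule has_fps_expansion_shift)
    have coeff_1: "fps_nth ((1 + fps_X :: complex fps) ^ n - 1) 1 = of_nat n"
      by (simp flip: fps_binomial_of_nat)
    with that have "(1 + fps_X :: complex fps) ^ n - 1 \<noteq> 0"
      by (metis fps_zero_nth of_nat_eq_0_iff not_gr0)
    then show "1 \<le> subdegree ((1 + fps_X :: complex fps) ^ n - 1)"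
      by (intro subdegree_geI) (auto simp flip: fps_binomial_of_nat)
    show "of_nat n = fps_nth ((1 + fps_X :: complex fps) ^ n - 1) 1"
      using coeff_1 by simp
  qed (intro fps_expansion_intros)
  have "(\<lambda>w. ((1 + w) ^ q + 1) * ((1 + w) ^ p + 1) * (2 + w) ^ 3 / ((1 + w) * V q w * V p w))
      has_fps_expansion N / M"
    unfolding N_def M_def using assms
    by (intro has_fps_expansion_divide' fps_expansion_intros V)
      (simp_all add: fps_mult_nth flip: fps_binomial_of_nat)
  then have "residue (\<lambda>w. ((1 + w) ^ q + 1) * ((1 + w) ^ p + 1) * (2 + w) ^ 3
      / ((1 + w) * V q w * V p w) / w ^ Suc 4) 0 = fps_nth (N / M) 4"
    by (rule residue_fps_expansion_over_power_at_0)
  moreover have "\<forall>\<^sub>F w in at 0. cot_kernel p q (1 + w) = ((1 + w) ^ q + 1) * ((1 + w) ^ p + 1)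
      * (2 + w) ^ 3 / ((1 + w) * V q w * V p w) / w ^ Suc 4"
    unfolding eventually_at_filter
  proof (intro always_eventually allI impI)
    fix w :: complex assume "w \<noteq> 0"
    \<comment> \<open>Where \<open>(1 + w) ^ q = 1\<close> or \<open>(1 + w) ^ p = 1\<close>, both sides are \<open>0\<close> by division by zero.\<close>
    then show "cot_kernel p q (1 + w) = ((1 + w) ^ q + 1) * ((1 + w) ^ p + 1)
      * (2 + w) ^ 3 / ((1 + w) * V q w * V p w) / w ^ Suc 4"
      by (cases "(1 + w) ^ q = 1 \<or> (1 + w) ^ p = 1 \<or> 1 + w = 0")
        (auto simp: cot_kernel_def cot_ratio_def V_def divide_simps numeral_eq_Suc)
  qed
  ultimately have "residue (cot_kernel p q) 1 = fps_nth (N / M) 4"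
    by (simp add: residue_shift_0[of _ 1] residue_cong)
  also have "\<dots> = (2/45) * (12 + 15 * of_nat q ^ 2 + 15 * of_nat p ^ 2
    + 5 * of_nat q ^ 2 * of_nat p ^ 2 - of_nat q ^ 4 - of_nat p ^ 4) / (of_nat q * of_nat p)"
    using fps_nth_4_binomial_quotient[of "of_nat q" "of_nat p", unfolded fps_binomial_of_nat] assms
    by (simp add: N_def M_def)
  finally show ?thesis .
qed

lemma sum_residues_cot_kernel_split:
  assumes "p > 0" "q > 0" "coprime p q"
  shows "residue (cot_kernel p q) 0 + residue (cot_kernel p q) 1
    + (\<Sum>z\<in>{z. z ^ q = 1} - {1}. residue (cot_kernel p q) z)
    + (\<Sum>z\<in>{z. z ^ p = 1} - {1}. residue (cot_kernel p q) z) = 1"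
proof -
  define U where "U n = {z::complex. z ^ n = 1} - {1}" for n
  have "finite (U n)" if "n > 0" for n
    using that by (simp add: U_def finite_roots_unity)
  moreover have "U q \<inter> U p = {}"
    using root_unity_coprime_eq_1[of _ p q] assms(3) by (auto simp: U_def)
  moreover have "0 \<notin> U n" "1 \<notin> U n" if "n > 0" for n
    using that by (auto simp: U_def power_0_left)
  moreover have "insert 0 ({z. z ^ q = 1} \<union> {z. z ^ p = 1}) = insert 0 (insert 1 (U q \<union> U p))"
    by (auto simp: U_def)
  ultimately show ?thesis
    using sum_residues_cot_kernel[OF assms(1,2)] assms(1,2)
    by (simp add: sum.union_disjoint add.assoc flip: U_def)
qed

lemma sum_residues_cot_kernel_roots:
  assumes "p > 0" "q > 0" "coprime p q"
  shows "(\<Sum>z\<in>{z. z ^ q = 1} - {1}. residue (cot_kernel p q) z) = 2 / of_nat q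
    * of_real (\<Sum>n=1..q-1. cot (pi * real n * real p / real q) * cot (pi * real n / real q) ^ 3)"
proof -
  have "(\<Sum>z\<in>{z. z ^ q = 1} - {1}. residue (cot_kernel p q) z)
      = (\<Sum>z\<in>{z. z ^ q = 1} - {1}. 2 / of_nat q * (cot_ratio (z ^ p) * cot_ratio z ^ 3))"
    using assms by (intro sum.cong refl) (simp add: residue_cot_kernel_root mult.assoc)
  \<comment> \<open>The omitted root \<open>z = 1\<close> contributes nothing, since \<open>cot_ratio 1 = 2 / 0 = 0\<close>.\<close>
  also have "\<dots> = (\<Sum>z\<in>{z. z ^ q = 1}. 2 / of_nat q * (cot_ratio (z ^ p) * cot_ratio z ^ 3))"
    using assms
      sum.remove[of "{z. z ^ q = 1}" 1 "\<lambda>z. 2 / of_nat q * (cot_ratio (z ^ p) * cot_ratio z ^ 3)"]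
    by (simp add: finite_roots_unity cot_ratio_def)
  also have "\<dots> = 2 / of_nat q * (\<Sum>z\<in>{z. z ^ q = 1}. cot_ratio (z ^ p) * cot_ratio z ^ 3)"
    by (simp add: sum_distrib_left)
  also have "(\<Sum>z\<in>{z. z ^ q = 1}. cot_ratio (z ^ p) * cot_ratio z ^ 3) = of_real
      (\<Sum>n=1..q-1. cot (pi * real n * real p / real q) * cot (pi * real n / real q) ^ 3)"
    by (rule sum_roots_unity_cot_ratio[OF assms(2)])
  finally show ?thesis .
qed

theorem mainTheorem15:
  fixes p q :: nat
  assumes "p \<ge> 2" and "q \<ge> 2" and "coprime p q"
  shows "real p * (\<Sum>n=1..q-1. cot (pi * real n * real p / real q) * (cot (pi * real n / real q)) ^ 3)
       + real q * (\<Sum>n=1..p-1. cot (pi * real n * real q / real p) * (cot (pi * real n / real p)) ^ 3)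
       = (1/45) * (real p ^ 4 + real q ^ 4 - 5 * real p ^ 2 * real q ^ 2 - 15 * real p ^ 2
                   - 15 * real q ^ 2 + 45 * real p * real q - 12)"
  (is "real p * ?Sq + real q * ?Sp = ?rhs")
proof -
  have "p > 0" "q > 0" "coprime q p" using assms by (simp_all add: coprime_commute)
  have "(1::complex) = -1 + (2/45) * (12 + 15 * of_nat q ^ 2 + 15 * of_nat p ^ 2
      + 5 * of_nat q ^ 2 * of_nat p ^ 2 - of_nat q ^ 4 - of_nat p ^ 4) / (of_nat q * of_nat p)
      + 2 / of_nat q * of_real ?Sq + 2 / of_nat p * of_real ?Sp"
    using sum_residues_cot_kernel_split[OF \<open>p > 0\<close> \<open>q > 0\<close> assms(3)]
      residue_cot_kernel_0[OF \<open>p > 0\<close> \<open>q > 0\<close>] residue_cot_kernel_1[OF \<open>p > 0\<close> \<open>q > 0\<close>]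
      sum_residues_cot_kernel_roots[OF \<open>p > 0\<close> \<open>q > 0\<close> assms(3)]
      sum_residues_cot_kernel_roots[OF \<open>q > 0\<close> \<open>p > 0\<close> \<open>coprime q p\<close>]
    by (simp add: cot_kernel_commute[of q p])
  then have "complex_of_real (real p * ?Sq + real q * ?Sp) = complex_of_real ?rhs"
    using \<open>p > 0\<close> \<open>q > 0\<close> by (simp add: field_simps) algebra
  then show ?thesis
    using of_real_eq_iff by blast
qed

end
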